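(* Consider the outlier-robust estimation problem \[ \min_{\mathbf{x}\in\mathcal{X}\subseteq\mathbb{R}^d}\ \sum_{i=1}^N \rho\big(r(\mathbf{x},\mathbf{z}_i),\beta_i\big)+\psi(\mathbf{x}), \] where $\mathbf{z}_1,\dots,\mathbf{z}_N$ are given measurements, $\beta_i>0$ are given thresholds, $r(\mathbf{x},\mathbf{z}_i)$ is a scalar residual, and $\psi$ is a regularizer. Assume that (a) $r^2(\cdot,\mathbf{z}_i)$ (for each $i$) and $\psi$ are polynomials in $\mathbf{x}$, and (b) $\mathcal{X}=\{\mathbf{x}\in\mathbb{R}^d \mid h_k(\mathbf{x})=0,\ k=1,\dots,l_h,\ g_j(\mathbf{x})\ge 0,\ j=1,\dots,l_g\}$ for finitely many polynomials $h_k,g_j$. If the cost $\rho$ is one of (i) truncated least squares $\rho_{\mathrm{TLS}}(r,\beta_i)=\min\{r^2/\beta_i^2,1\}$; (ii) maximum consensus $\rho_{\mathrm{MC}}(r,\beta_i)=0$ if $|r|\le\beta_i$ and $1$ otherwise; (iii) Geman–McClure $\rho_{\mathrm{GM}}(r,\beta_i)=\dfrac{r^2/\beta_i^2}{1+r^2/\beta_i^2}$; (iv) Tukey's biweight $\rho_{\mathrm{TB}}(r,\beta_i)=\frac{r^2}{\beta_i^2}-\frac{r^4}{\beta_i^4}+\frac{r^6}{3\beta_i^6}$ if $|r|\le\beta_i$ and $\frac13$ otherwise, then the problem can be equivalently recast as a polynomial optimization problem (minimization of a polynomial subject to finitely many polynomial equality and inequality constraints) in $d+N$ variables $(\mathbf{x},\boldsymbol{\theta})\in\mathbb{R}^{d}\times\mathbb{R}^N$,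 where each additional variable $\theta_i$ indicates the confidence of measurement $\mathbf{z}_i$ being an inlier. Moreover, if $\rho$ is one of (v) L1: $\rho_{\mathrm{L1}}(r,\beta_i)=|r|/\beta_i$; (vi) Huber: $\rho_{\mathrm{HB}}(r,\beta_i)=\frac{r^2}{2\beta_i^2}$ if $|r|\le\beta_i$ and $\frac{|r|}{\beta_i}-\frac12$ otherwise; (vii) adaptive: $\rho_{\mathrm{ADT},s}(r,\beta_i)=\frac{|s-2|}{s}\Big(\big(\frac{r^2/\beta_i^2}{|s-2|}+1\big)^{s/2}-1\Big)$ for a given scale parameter $s\in\mathbb{Q}\setminus\{0,2\}$, then the problem can also be equivalently written as a polynomial optimization problem, obtained by adding slack variable(s) for each measurement.
   Context: A polynomial optimization problem (POP) is a problem of the form $\min_{\mathbf{w}\in\mathbb{R}^n}\{p(\mathbf{w}) \mid h_k(\mathbf{w})=0,\ g_j(\mathbf{w})\ge 0\}$ with $p,h_k,g_j$ real polynomials. "Equivalently recast" means the optimal values coincide and minimizers of the original problem correspond to the $\mathbf{x}$-components of minimizers of the POP. *)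

theory Defs
  imports "HOL-Analysis.Analysis"
begin

text \<open>Points of R^n are represented as functions nat => real vanishing at coordinates >= n.\<close>
definition Rn :: "nat \<Rightarrow> (nat \<Rightarrow> real) set" where
  "Rn n = {w. \<forall>i. n \<le> i \<longrightarrow> w i = 0}"

inductive polyfun :: "nat \<Rightarrow> ((nat \<Rightarrow> real) \<Rightarrow> real) \<Rightarrow> bool" for n where
  pconst: "polyfun n (\<lambda>w. c)"
| pvar: "i < n \<Longrightarrow> polyfun n (\<lambda>w. w i)"
| padd: "polyfun n p \<Longrightarrow> polyfun n q \<Longrightarrow> polyfun n (\<lambda>w. p w + q w)"
| pmul: "polyfun n p \<Longrightarrow> polyfun n q \<Longrightarrow> polyfun n (\<lambda>w. p w * q w)"

definition semialg :: "nat \<Rightarrow> ((nat \<Rightarrow> real) \<Rightarrow> real) list \<Rightarrow> ((nat \<Rightarrow> real) \<Rightarrow> real) list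
    \<Rightarrow> (nat \<Rightarrow> real) set" where
  "semialg n hs gs = {w \<in> Rn n. (\<forall>h\<in>set hs. h w = 0) \<and> (\<forall>g\<in>set gs. g w \<ge> 0)}"

definition minimizers :: "('a \<Rightarrow> real) \<Rightarrow> 'a set \<Rightarrow> 'a set" where
  "minimizers f S = {x \<in> S. \<forall>y\<in>S. f x \<le> f y}"

definition proj :: "nat \<Rightarrow> (nat \<Rightarrow> real) \<Rightarrow> (nat \<Rightarrow> real)" where
  "proj d w = (\<lambda>i. if i < d then w i else 0)"

text \<open>min_{x in X} f x (X \<subseteq> R^d) is equivalently recast as a POP in n variables whose
  first d variables are x: same optimal value (in the extended reals, covering infeasible /
  unbounded problems), and the minimizers of the original problem are exactly the
  x-components of the minimizers of the POP.\<close>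
definition recast_as_POP :: "nat \<Rightarrow> nat \<Rightarrow> ((nat \<Rightarrow> real) \<Rightarrow> real) \<Rightarrow> (nat \<Rightarrow> real) set \<Rightarrow> bool" where
  "recast_as_POP d n f X \<longleftrightarrow> d \<le> n \<and>
     (\<exists>p hs gs. polyfun n p \<and> (\<forall>h\<in>set hs. polyfun n h) \<and> (\<forall>g\<in>set gs. polyfun n g) \<and>
        (INF x\<in>X. ereal (f x)) = (INF w\<in>semialg n hs gs. ereal (p w)) \<and>
        minimizers f X = proj d ` minimizers p (semialg n hs gs))"

definition rho_TLS :: "real \<Rightarrow> real \<Rightarrow> real" where
  "rho_TLS r \<beta> = min (r\<^sup>2 / \<beta>\<^sup>2) 1"
definition rho_MC :: "real \<Rightarrow> real \<Rightarrow> real" where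
  "rho_MC r \<beta> = (if \<bar>r\<bar> \<le> \<beta> then 0 else 1)"
definition rho_GM :: "real \<Rightarrow> real \<Rightarrow> real" where
  "rho_GM r \<beta> = (r\<^sup>2 / \<beta>\<^sup>2) / (1 + r\<^sup>2 / \<beta>\<^sup>2)"
definition rho_TB :: "real \<Rightarrow> real \<Rightarrow> real" where
  "rho_TB r \<beta> = (if \<bar>r\<bar> \<le> \<beta> then r\<^sup>2 / \<beta>\<^sup>2 - r^4 / \<beta>^4 + r^6 / (3 * \<beta>^6) else 1/3)"
definition rho_L1 :: "real \<Rightarrow> real \<Rightarrow> real" where
  "rho_L1 r \<beta> = \<bar>r\<bar> / \<beta>"
definition rho_HB :: "real \<Rightarrow> real \<Rightarrow> real" where
  "rho_HB r \<beta> = (if \<bar>r\<bar> \<le> \<beta> then r\<^sup>2 / (2 * \<beta>\<^sup>2) else \<bar>r\<bar> / \<beta> - 1/2)"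
definition rho_ADT :: "real \<Rightarrow> real \<Rightarrow> real \<Rightarrow> real" where
  "rho_ADT s r \<beta> = \<bar>s - 2\<bar> / s * (((r\<^sup>2 / \<beta>\<^sup>2) / \<bar>s - 2\<bar> + 1) powr (s / 2) - 1)"

text \<open>Objective of the robust estimation problem; r i x stands for r(x, z_i).\<close>
definition robust_cost :: "(real \<Rightarrow> real \<Rightarrow> real) \<Rightarrow> nat \<Rightarrow> (nat \<Rightarrow> (nat \<Rightarrow> real) \<Rightarrow> real)
    \<Rightarrow> (nat \<Rightarrow> real) \<Rightarrow> ((nat \<Rightarrow> real) \<Rightarrow> real) \<Rightarrow> (nat \<Rightarrow> real) \<Rightarrow> real" where
  "robust_cost \<rho> N r \<beta> \<psi> x = (\<Sum>i<N. \<rho> (r i x) (\<beta> i)) + \<psi> x"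

end

theory Submission
  imports Defs
begin

text \<open>Each cost is the minimum, over a few slack variables \<open>\<theta>\<close>, of a polynomial in \<open>u = r\<^sup>2\<close> and
  \<open>\<theta>\<close> subject to polynomial constraints whose coefficients depend on \<open>\<beta>\<close>: for instance
  \<open>min (u / \<beta>\<^sup>2) 1\<close> is the least \<open>\<theta>\<close> with \<open>(\<theta> - u / \<beta>\<^sup>2) (\<theta> - 1) = 0\<close>, \<open>\<bar>r\<bar> / \<beta>\<close> is the only
  \<open>\<theta> \<ge> 0\<close> with \<open>\<beta>\<^sup>2 \<theta>\<^sup>2 = u\<close>, and for the adaptive cost with \<open>s = a / c\<close> the constraints
  \<open>\<theta>\<^sub>0\<^bsup>2c\<^esup> = u / (\<beta>\<^sup>2 \<bar>s - 2\<bar>) + 1\<close>, \<open>\<theta>\<^sub>0 \<ge> 0\<close> and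
  \<open>\<theta>\<^sub>1 \<theta>\<^sub>0\<^bsup>max 0 (-a)\<^esup> = \<theta>\<^sub>0\<^bsup>max 0 a\<^esup>\<close> force \<open>\<theta>\<^sub>1\<close> to be the power with exponent \<open>s / 2\<close>. Giving each measurement its own block of slack variables turns
  the robust objective into a polynomial on a basic semialgebraic set of higher dimension which
  lies above the original objective and equals it at a suitable lift of every feasible \<open>x\<close>;
  hence the infima agree and the minimizers correspond under projection onto \<open>x\<close>. The costs
  TLS, MC, GM and TB need a single slack variable per measurement.\<close>

section \<open>Polynomial functions and recasting\<close>

lemma polyfun_cong: "polyfun n p \<Longrightarrow> (\<And>i. i < n \<Longrightarrow> w i = w' i) \<Longrightarrow> p w = p w'"
  by (induction rule: polyfun.induct) auto

lemma polyfun_proj: "polyfun n p \<Longrightarrow> p (proj n w) = p w"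
  by (rule polyfun_cong) (auto simp: proj_def)

lemma polyfun_mono: "polyfun n p \<Longrightarrow> n \<le> m \<Longrightarrow> polyfun m p"
  by (induction rule: polyfun.induct) (auto intro: polyfun.intros)

lemma polyfun_diff: "polyfun n p \<Longrightarrow> polyfun n q \<Longrightarrow> polyfun n (\<lambda>w. p w - q w)"
  using polyfun.padd[OF _ polyfun.pmul[OF polyfun.pconst[of n "-1"]], of p q] by simp

lemma polyfun_divide_const: "polyfun n p \<Longrightarrow> polyfun n (\<lambda>w. p w / c)"
  using polyfun.pmul[OF _ polyfun.pconst[of n "1 / c"], of p] by simp

lemma polyfun_power: "polyfun n p \<Longrightarrow> polyfun n (\<lambda>w. p w ^ k)"
  by (induction k) (auto intro: polyfun.intros)

lemma polyfun_sum: "(\<And>i. i \<in> A \<Longrightarrow> polyfun n (f i)) \<Longrightarrow> polyfun n (\<lambda>w. \<Sum>i\<in>A. f i w)"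
  by (induction A rule: infinite_finite_induct) (auto intro: polyfun.intros)

lemmas polyfun_intros =
  polyfun.pconst polyfun.pvar polyfun.padd polyfun.pmul polyfun_diff polyfun_divide_const polyfun_power

lemma polyfun_compose:
  "polyfun m p \<Longrightarrow> (\<And>j. j < m \<Longrightarrow> polyfun n (\<sigma> j)) \<Longrightarrow> polyfun n (\<lambda>w. p (\<lambda>j. \<sigma> j w))"
  by (induction rule: polyfun.induct) (auto intro: polyfun.intros)

lemma recast_as_POP_I:
  assumes "d \<le> n" and "polyfun n p" "\<forall>h\<in>set hs. polyfun n h" "\<forall>g\<in>set gs. polyfun n g"
    and lower: "\<And>w. w \<in> semialg n hs gs \<Longrightarrow> proj d w \<in> X \<and> f (proj d w) \<le> p w"
    and attain: "\<And>x. x \<in> X \<Longrightarrow> \<exists>w\<in>semialg n hs gs. proj d w = x \<and> p w = f x"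
  shows "recast_as_POP d n f X"
proof -
  let ?S = "semialg n hs gs"
  have "(INF x\<in>X. ereal (f x)) = (INF w\<in>?S. ereal (p w))"
  proof (rule antisym)
    show "(INF x\<in>X. ereal (f x)) \<le> (INF w\<in>?S. ereal (p w))"
      using lower by (intro INF_greatest) (meson INF_lower2 ereal_less_eq(3))
    show "(INF w\<in>?S. ereal (p w)) \<le> (INF x\<in>X. ereal (f x))"
      using attain by (intro INF_greatest) (metis INF_lower)
  qed
  moreover have "minimizers f X = proj d ` minimizers p ?S"
  proof
    show "minimizers f X \<subseteq> proj d ` minimizers p ?S"
    proof
      fix x assume x: "x \<in> minimizers f X"
      then obtain w where w: "w \<in> ?S" "proj d w = x" "p w = f x"
        using attain by (auto simp: minimizers_def)
      have "p w \<le> p w'" if "w' \<in> ?S" for w'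
        using lower[OF that] x w(3) by (auto simp: minimizers_def)
      with w show "x \<in> proj d ` minimizers p ?S"
        by (auto simp: minimizers_def)
    qed
    show "proj d ` minimizers p ?S \<subseteq> minimizers f X"
    proof
      fix x assume "x \<in> proj d ` minimizers p ?S"
      then obtain w where w: "w \<in> minimizers p ?S" "x = proj d w" by blast
      then have "x \<in> X" "f x \<le> p w"
        using lower by (auto simp: minimizers_def)
      moreover have "p w \<le> f y" if "y \<in> X" for y
        using attain[OF that] w(1) by (auto simp: minimizers_def)
      ultimately show "x \<in> minimizers f X"
        by (force simp: minimizers_def)
    qed
  qed
  ultimately show ?thesis
    unfolding recast_as_POP_def using assms(1-4) by blast
qed

section \<open>Polynomial liftings of a cost\<close>

definition polyfun_u_theta :: "nat \<Rightarrow> (real \<Rightarrow> (nat \<Rightarrow> real) \<Rightarrow> real) \<Rightarrow> bool" where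
  "polyfun_u_theta k F \<longleftrightarrow> polyfun (Suc k) (\<lambda>v. F (v 0) (\<lambda>j. v (Suc j)))"

lemma polyfun_u_theta_cong:
  assumes "polyfun_u_theta k F" and "\<And>j. j < k \<Longrightarrow> \<theta> j = \<theta>' j"
  shows "F u \<theta> = F u \<theta>'"
  using polyfun_cong[OF assms(1)[unfolded polyfun_u_theta_def],
      of "\<lambda>l. if l = 0 then u else \<theta> (l - 1)" "\<lambda>l. if l = 0 then u else \<theta>' (l - 1)"] assms(2)
  by simp

lemma polyfun_u_theta_compose:
  assumes "polyfun_u_theta k F" "polyfun n U" "\<And>j. j < k \<Longrightarrow> polyfun n (\<lambda>w. T w j)"
  shows "polyfun n (\<lambda>w. F (U w) (T w))"
proof -
  have "polyfun n (\<lambda>w. (\<lambda>v. F (v 0) (\<lambda>j. v (Suc j))) (\<lambda>j. if j = 0 then U w else T w (j - 1)))"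
    by (rule polyfun_compose[OF assms(1)[unfolded polyfun_u_theta_def]])
      (use assms(2,3) in \<open>auto simp: less_Suc_eq_0_disj\<close>)
  then show ?thesis by simp
qed

definition lifting_feasible :: "(real \<Rightarrow> real \<Rightarrow> (nat \<Rightarrow> real) \<Rightarrow> real) list
    \<Rightarrow> (real \<Rightarrow> real \<Rightarrow> (nat \<Rightarrow> real) \<Rightarrow> real) list \<Rightarrow> real \<Rightarrow> real \<Rightarrow> (nat \<Rightarrow> real) \<Rightarrow> bool" where
  "lifting_feasible HC GC b u \<theta> \<longleftrightarrow> (\<forall>h\<in>set HC. h b u \<theta> = 0) \<and> (\<forall>g\<in>set GC. g b u \<theta> \<ge> 0)"

text \<open>Polynomiality is required only for each fixed threshold
  \<open>b\<close>, which is data of the problem and may enter non-polynomially.\<close>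
definition poly_lifting :: "nat \<Rightarrow> (real \<Rightarrow> real \<Rightarrow> real) \<Rightarrow> (real \<Rightarrow> real \<Rightarrow> (nat \<Rightarrow> real) \<Rightarrow> real)
    \<Rightarrow> (real \<Rightarrow> real \<Rightarrow> (nat \<Rightarrow> real) \<Rightarrow> real) list \<Rightarrow> (real \<Rightarrow> real \<Rightarrow> (nat \<Rightarrow> real) \<Rightarrow> real) list
    \<Rightarrow> bool" where
  "poly_lifting k \<rho> Q HC GC \<longleftrightarrow>
     (\<forall>F\<in>set (Q # HC @ GC). \<forall>b. polyfun_u_theta k (F b)) \<and>
     (\<forall>b>0. \<forall>x \<theta>. lifting_feasible HC GC b (x\<^sup>2) \<theta> \<longrightarrow> \<rho> x b \<le> Q b (x\<^sup>2) \<theta>) \<and>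
     (\<forall>b>0. \<forall>x. \<exists>\<theta>. lifting_feasible HC GC b (x\<^sup>2) \<theta> \<and> Q b (x\<^sup>2) \<theta> = \<rho> x b)"

lemma poly_liftingI:
  assumes "\<And>F b. F \<in> set (Q # HC @ GC) \<Longrightarrow> polyfun_u_theta k (F b)"
    and "\<And>b x \<theta>. b > 0 \<Longrightarrow> lifting_feasible HC GC b (x\<^sup>2) \<theta> \<Longrightarrow> \<rho> x b \<le> Q b (x\<^sup>2) \<theta>"
    and "\<And>b x. b > 0 \<Longrightarrow> \<exists>\<theta>. lifting_feasible HC GC b (x\<^sup>2) \<theta> \<and> Q b (x\<^sup>2) \<theta> = \<rho> x b"
  shows "poly_lifting k \<rho> Q HC GC"
  using assms unfolding poly_lifting_def by blast

section \<open>The lifted problem\<close>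

locale robust_lifting =
  fixes d N k :: nat
    and r :: "nat \<Rightarrow> (nat \<Rightarrow> real) \<Rightarrow> real"
    and \<beta> :: "nat \<Rightarrow> real"
    and \<psi> :: "(nat \<Rightarrow> real) \<Rightarrow> real"
    and hs gs :: "((nat \<Rightarrow> real) \<Rightarrow> real) list"
    and \<rho> :: "real \<Rightarrow> real \<Rightarrow> real"
    and Q :: "real \<Rightarrow> real \<Rightarrow> (nat \<Rightarrow> real) \<Rightarrow> real"
    and HC GC :: "(real \<Rightarrow> real \<Rightarrow> (nat \<Rightarrow> real) \<Rightarrow> real) list"
  assumes lifting: "poly_lifting k \<rho> Q HC GC"
    and beta_pos: "\<forall>i<N. \<beta> i > 0"
    and r2_poly: "\<forall>i<N. polyfun d (\<lambda>x. (r i x)\<^sup>2)"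
    and psi_poly: "polyfun d \<psi>"
    and hs_poly: "\<forall>h\<in>set hs. polyfun d h"
    and gs_poly: "\<forall>g\<in>set gs. polyfun d g"
begin

definition block :: "nat \<Rightarrow> (nat \<Rightarrow> real) \<Rightarrow> nat \<Rightarrow> real" where
  "block i w j = w (d + k * i + j)"

definition lift :: "(real \<Rightarrow> real \<Rightarrow> (nat \<Rightarrow> real) \<Rightarrow> real) \<Rightarrow> nat \<Rightarrow> (nat \<Rightarrow> real) \<Rightarrow> real" where
  "lift F i w = F (\<beta> i) ((r i w)\<^sup>2) (block i w)"

definition lifted_cost :: "(nat \<Rightarrow> real) \<Rightarrow> real" where
  "lifted_cost w = (\<Sum>i<N. lift Q i w) + \<psi> w"

definition lifted_eqs :: "((nat \<Rightarrow> real) \<Rightarrow> real) list" where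
  "lifted_eqs = hs @ concat (map (\<lambda>i. map (\<lambda>h. lift h i) HC) [0..<N])"

definition lifted_ineqs :: "((nat \<Rightarrow> real) \<Rightarrow> real) list" where
  "lifted_ineqs = gs @ concat (map (\<lambda>i. map (\<lambda>g. lift g i) GC) [0..<N])"

abbreviation lifted_set :: "(nat \<Rightarrow> real) set" where
  "lifted_set \<equiv> semialg (d + N * k) lifted_eqs lifted_ineqs"

lemma block_index_less: "i < N \<Longrightarrow> j < k \<Longrightarrow> d + k * i + j < d + N * k"
proof -
  assume "i < N" "j < k"
  then have "k * i + j < k * Suc i" by simp
  also have "\<dots> \<le> k * N" using \<open>i < N\<close> by (intro mult_le_mono2) simp
  finally show ?thesis by (simp add: mult.commute)
qed

lemma r2_proj: "i < N \<Longrightarrow> (r i (proj d w))\<^sup>2 = (r i w)\<^sup>2"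
  using polyfun_proj r2_poly by blast

lemma polyfun_lift:
  assumes "F \<in> set (Q # HC @ GC)" "i < N"
  shows "polyfun (d + N * k) (lift F i)"
  unfolding lift_def[abs_def] block_def
proof (rule polyfun_u_theta_compose[of k "F (\<beta> i)"])
  show "polyfun_u_theta k (F (\<beta> i))"
    using lifting assms(1) unfolding poly_lifting_def by blast
  show "polyfun (d + N * k) (\<lambda>w. (r i w)\<^sup>2)"
    using assms(2) r2_poly polyfun_mono le_add1 by blast
  show "polyfun (d + N * k) (\<lambda>w. w (d + k * i + j))" if "j < k" for j
    using block_index_less[OF assms(2) that] by (rule polyfun.pvar)
qed

lemma polyfun_lifted:
  "polyfun (d + N * k) lifted_cost"
  "\<forall>h\<in>set lifted_eqs. polyfun (d + N * k) h"
  "\<forall>g\<in>set lifted_ineqs. polyfun (d + N * k) g"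
  using polyfun_lift psi_poly hs_poly gs_poly
  by (auto simp: lifted_cost_def[abs_def] lifted_eqs_def lifted_ineqs_def
      intro!: polyfun.padd polyfun_sum intro: polyfun_mono)

lemma lifted_set_feasible:
  assumes "w \<in> lifted_set" "i < N"
  shows "lifting_feasible HC GC (\<beta> i) ((r i (proj d w))\<^sup>2) (block i w)"
proof -
  have "lift h i w = 0" if "h \<in> set HC" for h
    using assms that by (force simp: semialg_def lifted_eqs_def)
  moreover have "lift g i w \<ge> 0" if "g \<in> set GC" for g
    using assms that by (force simp: semialg_def lifted_ineqs_def)
  ultimately show ?thesis
    by (simp add: lifting_feasible_def lift_def r2_proj assms(2))
qed

lemma proj_lifted_set:
  assumes "w \<in> lifted_set"
  shows "proj d w \<in> semialg d hs gs"
proof -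
  have "h (proj d w) = 0" if "h \<in> set hs" for h
    using assms that hs_poly polyfun_proj[of d h w] by (auto simp: semialg_def lifted_eqs_def)
  moreover have "g (proj d w) \<ge> 0" if "g \<in> set gs" for g
    using assms that gs_poly polyfun_proj[of d g w] by (auto simp: semialg_def lifted_ineqs_def)
  moreover have "proj d w \<in> Rn d"
    by (simp add: Rn_def proj_def)
  ultimately show ?thesis
    by (simp add: semialg_def)
qed

lemma robust_cost_le_lifted_cost:
  assumes "w \<in> lifted_set"
  shows "robust_cost \<rho> N r \<beta> \<psi> (proj d w) \<le> lifted_cost w"
proof -
  have "\<rho> (r i (proj d w)) (\<beta> i) \<le> lift Q i w" if "i < N" for i
  proof -
    have "\<rho> (r i (proj d w)) (\<beta> i) \<le> Q (\<beta> i) ((r i (proj d w))\<^sup>2) (block i w)"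
      using lifting lifted_set_feasible[OF assms that] beta_pos that
      unfolding poly_lifting_def by blast
    then show ?thesis by (simp add: lift_def r2_proj that)
  qed
  then have "(\<Sum>i<N. \<rho> (r i (proj d w)) (\<beta> i)) \<le> (\<Sum>i<N. lift Q i w)"
    by (intro sum_mono) simp
  then show ?thesis
    using polyfun_proj[OF psi_poly] by (simp add: robust_cost_def lifted_cost_def)
qed

definition stack :: "(nat \<Rightarrow> real) \<Rightarrow> (nat \<Rightarrow> nat \<Rightarrow> real) \<Rightarrow> nat \<Rightarrow> real" where
  "stack x \<Theta> l = (if l < d then x l else if l < d + N * k then \<Theta> ((l - d) div k) ((l - d) mod k) else 0)"

lemma block_stack: "i < N \<Longrightarrow> j < k \<Longrightarrow> block i (stack x \<Theta>) j = \<Theta> i j"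
  using block_index_less by (simp add: block_def stack_def)

lemma stack_in_Rn: "stack x \<Theta> \<in> Rn (d + N * k)"
  by (simp add: Rn_def stack_def)

lemma proj_stack: "x \<in> Rn d \<Longrightarrow> proj d (stack x \<Theta>) = x"
  by (auto simp: Rn_def proj_def stack_def)

lemma lift_stack:
  assumes "F \<in> set (Q # HC @ GC)" "i < N" "x \<in> Rn d"
  shows "lift F i (stack x \<Theta>) = F (\<beta> i) ((r i x)\<^sup>2) (\<Theta> i)"
proof -
  have "polyfun_u_theta k (F (\<beta> i))"
    using lifting assms(1) unfolding poly_lifting_def by blast
  then have "F (\<beta> i) ((r i x)\<^sup>2) (block i (stack x \<Theta>)) = F (\<beta> i) ((r i x)\<^sup>2) (\<Theta> i)"
    by (rule polyfun_u_theta_cong) (simp add: block_stack assms(2))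
  then show ?thesis
    using r2_proj[OF assms(2), of "stack x \<Theta>"] by (simp add: lift_def proj_stack assms(3))
qed

lemma lifted_set_attains:
  assumes x: "x \<in> semialg d hs gs"
  shows "\<exists>w\<in>lifted_set. proj d w = x \<and> lifted_cost w = robust_cost \<rho> N r \<beta> \<psi> x"
proof -
  have "\<forall>i. \<exists>\<theta>. i < N \<longrightarrow> lifting_feasible HC GC (\<beta> i) ((r i x)\<^sup>2) \<theta> \<and>
      Q (\<beta> i) ((r i x)\<^sup>2) \<theta> = \<rho> (r i x) (\<beta> i)"
    using lifting beta_pos unfolding poly_lifting_def by blast
  then obtain \<Theta> where \<Theta>: "\<And>i. i < N \<Longrightarrow> lifting_feasible HC GC (\<beta> i) ((r i x)\<^sup>2) (\<Theta> i)"
    "\<And>i. i < N \<Longrightarrow> Q (\<beta> i) ((r i x)\<^sup>2) (\<Theta> i) = \<rho> (r i x) (\<beta> i)"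
    by metis
  have xR: "x \<in> Rn d" using x by (simp add: semialg_def)
  have polyfun_stack: "h (stack x \<Theta>) = h x" if "polyfun d h" for h
    using polyfun_proj[OF that, of "stack x \<Theta>"] by (simp add: proj_stack xR)
  have "h (stack x \<Theta>) = 0" if "h \<in> set hs" for h
    using x that hs_poly polyfun_stack[of h] by (simp add: semialg_def)
  moreover have "g (stack x \<Theta>) \<ge> 0" if "g \<in> set gs" for g
    using x that gs_poly polyfun_stack[of g] by (simp add: semialg_def)
  ultimately have "stack x \<Theta> \<in> lifted_set"
    using \<Theta>(1) stack_in_Rn
    by (auto simp: semialg_def lifted_eqs_def lifted_ineqs_def lifting_feasible_def lift_stack xR)
  moreover have "lifted_cost (stack x \<Theta>) = robust_cost \<rho> N r \<beta> \<psi> x"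
    using \<Theta>(2) polyfun_proj[OF psi_poly, of "stack x \<Theta>"]
    by (simp add: lifted_cost_def robust_cost_def lift_stack proj_stack xR)
  ultimately show ?thesis
    using proj_stack[OF xR] by blast
qed

theorem recast_as_POP_lifted: "recast_as_POP d (d + N * k) (robust_cost \<rho> N r \<beta> \<psi>) (semialg d hs gs)"
  using proj_lifted_set robust_cost_le_lifted_cost lifted_set_attains
  by (intro recast_as_POP_I[OF le_add1 polyfun_lifted]) blast+

end

section \<open>Liftings of the robust costs\<close>

lemma poly_lifting_min:
  assumes "\<And>b. polyfun_u_theta 1 (\<lambda>u \<theta>. f b u)" "\<And>b. polyfun_u_theta 1 (\<lambda>u \<theta>. g b u)"
    and min: "\<And>b x. b > 0 \<Longrightarrow> \<rho> x b = min (f b (x\<^sup>2)) (g b (x\<^sup>2))"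
  shows "poly_lifting 1 \<rho> (\<lambda>b u \<theta>. \<theta> 0) [\<lambda>b u \<theta>. (\<theta> 0 - f b u) * (\<theta> 0 - g b u)] []"
proof (rule poly_liftingI, goal_cases polynomial lower_bound attained)
  case (polynomial F b)
  then show ?case
    using assms(1,2)[of b] unfolding polyfun_u_theta_def by (auto; intro polyfun_intros; simp)
next
  case (lower_bound b x \<theta>)
  then show ?case by (auto simp: lifting_feasible_def min[of b x])
next
  case (attained b x)
  then show ?case by (intro exI[of _ "\<lambda>_. \<rho> x b"]) (auto simp: lifting_feasible_def min_def min)
qed

lemma poly_lifting_TLS: "poly_lifting 1 rho_TLS (\<lambda>b u \<theta>. \<theta> 0) [\<lambda>b u \<theta>. (\<theta> 0 - u / b\<^sup>2) * (\<theta> 0 - 1)] []"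
  by (rule poly_lifting_min) (auto simp: polyfun_u_theta_def rho_TLS_def intro!: polyfun_intros)

lemma rho_TB_eq_min:
  assumes "b > 0"
  shows "rho_TB x b = min (x\<^sup>2 / b\<^sup>2 - (x\<^sup>2 / b\<^sup>2)\<^sup>2 + (x\<^sup>2 / b\<^sup>2) ^ 3 / 3) (1 / 3)"
proof -
  define v where "v = x\<^sup>2 / b\<^sup>2"
  have powers: "x ^ 4 / b ^ 4 = v\<^sup>2" "x ^ 6 / (3 * b ^ 6) = v ^ 3 / 3"
    by (simp_all add: v_def power_divide flip: power_mult)
  have "\<bar>x\<bar> \<le> b \<longleftrightarrow> v \<le> 1"
    using abs_le_square_iff[of x b] assms by (simp add: v_def divide_le_eq_1)
  moreover have "v - v\<^sup>2 + v ^ 3 / 3 = 1 / 3 + (v - 1) ^ 3 / 3"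
    by (simp add: power3_eq_cube power2_eq_square field_simps)
  then have "v - v\<^sup>2 + v ^ 3 / 3 \<le> 1 / 3 \<longleftrightarrow> v \<le> 1"
    by (simp add: power_le_zero_eq)
  ultimately show ?thesis
    by (auto simp: rho_TB_def min_def powers v_def[symmetric])
qed

lemma poly_lifting_TB:
  "poly_lifting 1 rho_TB (\<lambda>b u \<theta>. \<theta> 0)
     [\<lambda>b u \<theta>. (\<theta> 0 - (u / b\<^sup>2 - (u / b\<^sup>2)\<^sup>2 + (u / b\<^sup>2) ^ 3 / 3)) * (\<theta> 0 - 1 / 3)] []"
  by (rule poly_lifting_min) (auto simp: polyfun_u_theta_def rho_TB_eq_min intro!: polyfun_intros)

lemma poly_lifting_MC:
  "poly_lifting 1 rho_MC (\<lambda>b u \<theta>. \<theta> 0) [\<lambda>b u \<theta>. \<theta> 0 * (\<theta> 0 - 1)] [\<lambda>b u \<theta>. (1 - \<theta> 0) * (b\<^sup>2 - u)]"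
proof (rule poly_liftingI, goal_cases polynomial lower_bound attained)
  case (polynomial F b)
  then show ?case by (auto simp: polyfun_u_theta_def intro!: polyfun_intros)
next
  case (lower_bound b x \<theta>)
  then have "\<theta> 0 = 0 \<or> \<theta> 0 = 1" and "0 \<le> (1 - \<theta> 0) * (b\<^sup>2 - x\<^sup>2)"
    by (auto simp: lifting_feasible_def)
  with lower_bound(1) show ?case
    using abs_le_square_iff[of x b] by (auto simp: rho_MC_def)
next
  case (attained b x)
  then show ?case
    using abs_le_square_iff[of x b]
    by (intro exI[of _ "\<lambda>_. rho_MC x b"]) (auto simp: lifting_feasible_def rho_MC_def)
qed

lemma rho_GM_eq: "b > 0 \<Longrightarrow> rho_GM x b = x\<^sup>2 / (b\<^sup>2 + x\<^sup>2)"
  by (simp add: rho_GM_def field_simps)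

lemma poly_lifting_GM: "poly_lifting 1 rho_GM (\<lambda>b u \<theta>. \<theta> 0) [\<lambda>b u \<theta>. \<theta> 0 * (b\<^sup>2 + u) - u] []"
proof (rule poly_liftingI, goal_cases polynomial lower_bound attained)
  case (polynomial F b)
  then show ?case by (auto simp: polyfun_u_theta_def intro!: polyfun_intros)
next
  case (lower_bound b x \<theta>)
  then have "\<theta> 0 * (b\<^sup>2 + x\<^sup>2) = x\<^sup>2" and "b\<^sup>2 + x\<^sup>2 > 0"
    by (auto simp: lifting_feasible_def add_pos_nonneg)
  then have "\<theta> 0 = x\<^sup>2 / (b\<^sup>2 + x\<^sup>2)"
    by (simp add: eq_divide_eq del: sum_power2_eq_zero_iff)
  with lower_bound(1) show ?case by (simp add: rho_GM_eq)
next
  case (attained b x)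
  then have "b\<^sup>2 + x\<^sup>2 > 0" by (simp add: add_pos_nonneg)
  with attained show ?case
    by (intro exI[of _ "\<lambda>_. rho_GM x b"]) (simp add: lifting_feasible_def rho_GM_eq)
qed

lemma eq_abs_divide_of_square_eq:
  fixes b t x :: real
  assumes "b > 0" "t \<ge> 0" "b\<^sup>2 * t\<^sup>2 = x\<^sup>2"
  shows "t = \<bar>x\<bar> / b"
proof -
  have "(b * t)\<^sup>2 = \<bar>x\<bar>\<^sup>2" using assms(3) by (simp add: power_mult_distrib)
  then have "b * t = \<bar>x\<bar>" using assms(1,2) power2_eq_iff_nonneg[of "b * t" "\<bar>x\<bar>"] by simp
  then show ?thesis using assms(1) by (simp add: field_simps)
qed

lemma poly_lifting_L1: "poly_lifting 1 rho_L1 (\<lambda>b u \<theta>. \<theta> 0) [\<lambda>b u \<theta>. b\<^sup>2 * (\<theta> 0)\<^sup>2 - u] [\<lambda>b u \<theta>. \<theta> 0]"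
proof (rule poly_liftingI, goal_cases polynomial lower_bound attained)
  case (polynomial F b)
  then show ?case by (auto simp: polyfun_u_theta_def intro!: polyfun_intros)
next
  case (lower_bound b x \<theta>)
  then show ?case
    using eq_abs_divide_of_square_eq[of b "\<theta> 0" x] by (simp add: lifting_feasible_def rho_L1_def)
next
  case (attained b x)
  then show ?case
    by (intro exI[of _ "\<lambda>_. \<bar>x\<bar> / b"]) (simp add: lifting_feasible_def rho_L1_def power_divide)
qed

lemma rho_HB_eq:
  assumes "b > 0"
  shows "rho_HB x b = (min (\<bar>x\<bar> / b) 1)\<^sup>2 / 2 + \<bar>x\<bar> / b - min (\<bar>x\<bar> / b) 1"
  using assms by (auto simp: rho_HB_def min_def power_divide divide_le_eq_1)

lemma poly_lifting_HB:
  "poly_lifting 2 rho_HB (\<lambda>b u \<theta>. (\<theta> 1)\<^sup>2 / 2 + \<theta> 0 - \<theta> 1)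
     [\<lambda>b u \<theta>. b\<^sup>2 * (\<theta> 0)\<^sup>2 - u, \<lambda>b u \<theta>. (1 - \<theta> 1) * (\<theta> 0 - \<theta> 1)]
     [\<lambda>b u \<theta>. \<theta> 0, \<lambda>b u \<theta>. 1 - \<theta> 1, \<lambda>b u \<theta>. \<theta> 0 - \<theta> 1]"
proof (rule poly_liftingI, goal_cases polynomial lower_bound attained)
  case (polynomial F b)
  then show ?case by (auto simp: polyfun_u_theta_def intro!: polyfun_intros)
next
  case (lower_bound b x \<theta>)
  then have "\<theta> 0 = \<bar>x\<bar> / b"
    using eq_abs_divide_of_square_eq[of b "\<theta> 0" x] by (simp add: lifting_feasible_def)
  moreover have "\<theta> 1 = min (\<theta> 0) 1"
    using lower_bound(2) by (auto simp: lifting_feasible_def min_def)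
  ultimately show ?case using lower_bound(1) by (simp add: rho_HB_eq)
next
  case (attained b x)
  then show ?case
    by (intro exI[of _ "\<lambda>j. if j = 0 then \<bar>x\<bar> / b else min (\<bar>x\<bar> / b) 1"])
      (auto simp: lifting_feasible_def rho_HB_eq power_divide min_def)
qed

lemma mult_power_eq_power_iff_powr:
  fixes t y :: real and a :: int
  assumes "t > 0"
  shows "y * t ^ nat (- a) = t ^ nat a \<longleftrightarrow> y = t powr of_int a"
  using assms by (auto simp: powr_int eq_divide_eq)

lemma powr_divide_of_power_eq:
  fixes t B a :: real
  assumes "t \<ge> 0" "q > 0" "t ^ q = B" "B > 0"
  shows "B powr (a / q) = t powr a"
proof -
  have "t > 0" using assms by (metis less_eq_real_def zero_power)
  then have "B = t powr q" using assms(3) by (simp add: powr_realpow)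
  then show ?thesis using assms(2) by (simp add: powr_powr)
qed

lemma poly_lifting_ADT:
  fixes a c :: int
  assumes "c > 0" and s: "s = of_int a / of_int c"
  shows "poly_lifting 2 (rho_ADT s) (\<lambda>b u \<theta>. \<bar>s - 2\<bar> / s * (\<theta> 1 - 1))
     [\<lambda>b u \<theta>. (\<theta> 0) ^ nat (2 * c) - (u / b\<^sup>2 / \<bar>s - 2\<bar> + 1),
      \<lambda>b u \<theta>. \<theta> 1 * (\<theta> 0) ^ nat (- a) - (\<theta> 0) ^ nat a]
     [\<lambda>b u \<theta>. \<theta> 0]"
proof -
  define q where "q = nat (2 * c)"
  have "q > 0" and s_half: "s / 2 = of_int a / real q"
    using assms by (simp_all add: q_def)
  have base_pos: "x\<^sup>2 / b\<^sup>2 / \<bar>s - 2\<bar> + 1 > 0" for b x :: real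
    by (simp add: add_nonneg_pos)
  have exact: "\<bar>s - 2\<bar> / s * (\<theta>1 - 1) = rho_ADT s x b"
    if "\<theta>0 \<ge> 0" "\<theta>0 ^ q = x\<^sup>2 / b\<^sup>2 / \<bar>s - 2\<bar> + 1" "\<theta>1 * \<theta>0 ^ nat (- a) = \<theta>0 ^ nat a"
    for b x \<theta>0 \<theta>1 :: real
  proof -
    have "\<theta>0 > 0" using that(1,2) base_pos \<open>q > 0\<close> by (metis less_eq_real_def zero_power)
    then have "\<theta>1 = \<theta>0 powr of_int a" using that(3) by (simp add: mult_power_eq_power_iff_powr)
    also have "\<dots> = (x\<^sup>2 / b\<^sup>2 / \<bar>s - 2\<bar> + 1) powr (s / 2)"
      using powr_divide_of_power_eq[OF that(1) \<open>q > 0\<close> that(2) base_pos] by (simp add: s_half)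
    finally show ?thesis by (simp add: rho_ADT_def)
  qed
  show ?thesis
  proof (rule poly_liftingI, goal_cases polynomial lower_bound attained)
    case (polynomial F b)
    then show ?case by (auto simp: polyfun_u_theta_def intro!: polyfun_intros)
  next
    case (lower_bound b x \<theta>)
    then show ?case using exact[of "\<theta> 0"] by (simp add: lifting_feasible_def q_def)
  next
    case (attained b x)
    define t where "t = root q (x\<^sup>2 / b\<^sup>2 / \<bar>s - 2\<bar> + 1)"
    have "t > 0" and t_pow: "t ^ q = x\<^sup>2 / b\<^sup>2 / \<bar>s - 2\<bar> + 1"
      using \<open>q > 0\<close> base_pos[of x b] by (simp_all add: t_def real_root_pow_pos2)
    with exact[of t] t_pow \<open>t > 0\<close> show ?case
      by (intro exI[of _ "\<lambda>j. if j = 0 then t else t powr of_int a"])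
        (simp add: q_def lifting_feasible_def mult_power_eq_power_iff_powr)
  qed
qed

text \<open>The exclusions \<open>s \<noteq> 0\<close> and \<open>s \<noteq> 2\<close> of the paper are not needed: in both cases the factor
  \<open>\<bar>s - 2\<bar> / s\<close> is \<open>0\<close> (for \<open>s = 0\<close> because \<open>x / 0 = 0\<close>), so cost and lifting both vanish.\<close>
lemma poly_lifting_ADT_rational: "s \<in> \<rat> \<Longrightarrow> \<exists>Q HC GC. poly_lifting 2 (rho_ADT s) Q HC GC"
  by (elim Rats_cases') (blast intro: poly_lifting_ADT)

theorem proposition1:
  fixes d N :: nat
    and r :: "nat \<Rightarrow> (nat \<Rightarrow> real) \<Rightarrow> real"
    and \<beta> :: "nat \<Rightarrow> real"
    and \<psi> :: "(nat \<Rightarrow> real) \<Rightarrow> real"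
    and hs gs :: "((nat \<Rightarrow> real) \<Rightarrow> real) list"
  assumes beta_pos: "\<forall>i<N. \<beta> i > 0"
    and r2_poly: "\<forall>i<N. polyfun d (\<lambda>x. (r i x)\<^sup>2)"
    and psi_poly: "polyfun d \<psi>"
    and hs_poly: "\<forall>h\<in>set hs. polyfun d h"
    and gs_poly: "\<forall>g\<in>set gs. polyfun d g"
  shows "(\<forall>\<rho> \<in> {rho_TLS, rho_MC, rho_GM, rho_TB}.
            recast_as_POP d (d + N) (robust_cost \<rho> N r \<beta> \<psi>) (semialg d hs gs))
       \<and> (\<forall>\<rho> \<in> {rho_L1, rho_HB} \<union> {rho_ADT s | s. s \<in> \<rat> \<and> s \<noteq> 0 \<and> s \<noteq> 2}.
            \<exists>m. recast_as_POP d (d + m) (robust_cost \<rho> N r \<beta> \<psi>) (semialg d hs gs))"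
proof -
  have recast: "recast_as_POP d (d + N * k) (robust_cost \<rho> N r \<beta> \<psi>) (semialg d hs gs)"
    if "poly_lifting k \<rho> Q HC GC" for k \<rho> Q HC GC
    using robust_lifting.recast_as_POP_lifted[OF robust_lifting.intro[OF that assms]] .
  show ?thesis
  proof (intro conjI ballI)
    fix \<rho> assume "\<rho> \<in> {rho_TLS, rho_MC, rho_GM, rho_TB}"
    then obtain Q HC GC where "poly_lifting 1 \<rho> Q HC GC"
      using poly_lifting_TLS poly_lifting_MC poly_lifting_GM poly_lifting_TB by blast
    from recast[OF this] show "recast_as_POP d (d + N) (robust_cost \<rho> N r \<beta> \<psi>) (semialg d hs gs)"
      by simp
  next
    fix \<rho> assume "\<rho> \<in> {rho_L1, rho_HB} \<union> {rho_ADT s | s. s \<in> \<rat> \<and> s \<noteq> 0 \<and> s \<noteq> 2}"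
    then obtain k Q HC GC where "poly_lifting k \<rho> Q HC GC"
      using poly_lifting_L1 poly_lifting_HB poly_lifting_ADT_rational by blast
    from recast[OF this]
    show "\<exists>m. recast_as_POP d (d + m) (robust_cost \<rho> N r \<beta> \<psi>) (semialg d hs gs)"
      by blast
  qed
qed

end
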